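(* Let $U\colon\mathcal D\to\mathcal C$ be a strong monoidal functor between left closed monoidal categories. If $U$ is conservative and left closed, and $\mathcal C$ is left autonomous, then $\mathcal D$ is left autonomous.
   Context: Monoidal categories are strict. A monoidal category is left closed if for every object $X$ the functor $?\otimes X$ has a right adjoint $[X,?]^l$, with counit $\mathrm{ev}^X_Y\colon [X,Y]^l\otimes X\to Y$. A strong monoidal functor $U$ with structure isomorphisms $U_2(A,B)\colon UA\otimes UB\to U(A\otimes B)$, $U_0\colon\mathbb 1\to U\mathbb 1$ between left closed monoidal categories is left closed if for all $X,Y$ the morphism $U^l_{X,Y}\colon U[X,Y]^l\to[UX,UY]^l$ corresponding by adjunction to $U(\mathrm{ev}^X_Y)U_2([X,Y]^l,X)$ is an isomorphism. Left autonomous means every object $X$ has a left dual ${}^\vee X$ with $\mathrm{ev}_X\colon{}^\vee X\otimes X\to\mathbb 1$, $\mathrm{coev}_X\colon\mathbb 1\to X\otimes{}^\vee X$ satisfying the zigzag identities. Conservative means reflecting isomorphisms. *)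

theory Defs
  imports Main
begin

text \<open>A (strict) left closed monoidal category, given explicitly as data:
objects, arrows with domain/codomain, identities, composition
(cComp g f = g after f), tensor on objects and arrows, unit,
and the chosen internal homs [X,Y]^l (cHom X Y) with counits ev^X_Y (cEv X Y).\<close>

record ('o, 'm) lcmc =
  cObj  :: "'o set"
  cArr  :: "'m set"
  cDom  :: "'m \<Rightarrow> 'o"
  cCod  :: "'m \<Rightarrow> 'o"
  cId   :: "'o \<Rightarrow> 'm"
  cComp :: "'m \<Rightarrow> 'm \<Rightarrow> 'm"
  cTen  :: "'o \<Rightarrow> 'o \<Rightarrow> 'o"
  cTenA :: "'m \<Rightarrow> 'm \<Rightarrow> 'm"
  cUnit :: "'o"
  cHom  :: "'o \<Rightarrow> 'o \<Rightarrow> 'o"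
  cEv   :: "'o \<Rightarrow> 'o \<Rightarrow> 'm"

definition hom :: "('o, 'm, 'z) lcmc_scheme \<Rightarrow> 'o \<Rightarrow> 'o \<Rightarrow> 'm set" where
  "hom C a b = {f \<in> cArr C. cDom C f = a \<and> cCod C f = b}"

definition category :: "('o, 'm, 'z) lcmc_scheme \<Rightarrow> bool" where
  "category C \<longleftrightarrow>
     (\<forall>f\<in>cArr C. cDom C f \<in> cObj C \<and> cCod C f \<in> cObj C) \<and>
     (\<forall>a\<in>cObj C. cId C a \<in> hom C a a) \<and>
     (\<forall>f\<in>cArr C. \<forall>g\<in>cArr C. cCod C f = cDom C g \<longrightarrow>
         cComp C g f \<in> hom C (cDom C f) (cCod C g)) \<and>
     (\<forall>f\<in>cArr C. cComp C (cId C (cCod C f)) f = f \<and> cComp C f (cId C (cDom C f)) = f) \<and>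
     (\<forall>f\<in>cArr C. \<forall>g\<in>cArr C. \<forall>h\<in>cArr C. cCod C f = cDom C g \<longrightarrow> cCod C g = cDom C h \<longrightarrow>
         cComp C h (cComp C g f) = cComp C (cComp C h g) f)"

definition iso :: "('o, 'm, 'z) lcmc_scheme \<Rightarrow> 'm \<Rightarrow> bool" where
  "iso C f \<longleftrightarrow> f \<in> cArr C \<and>
     (\<exists>g \<in> hom C (cCod C f) (cDom C f).
        cComp C g f = cId C (cDom C f) \<and> cComp C f g = cId C (cCod C f))"

definition strict_monoidal :: "('o, 'm, 'z) lcmc_scheme \<Rightarrow> bool" where
  "strict_monoidal C \<longleftrightarrow> category C \<and>
     cUnit C \<in> cObj C \<and>
     (\<forall>a\<in>cObj C. \<forall>b\<in>cObj C. cTen C a b \<in> cObj C) \<and>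
     (\<forall>f\<in>cArr C. \<forall>g\<in>cArr C.
        cTenA C f g \<in> hom C (cTen C (cDom C f) (cDom C g)) (cTen C (cCod C f) (cCod C g))) \<and>
     (\<forall>a\<in>cObj C. \<forall>b\<in>cObj C. cTenA C (cId C a) (cId C b) = cId C (cTen C a b)) \<and>
     (\<forall>f\<in>cArr C. \<forall>f'\<in>cArr C. \<forall>g\<in>cArr C. \<forall>g'\<in>cArr C.
        cCod C f = cDom C f' \<longrightarrow> cCod C g = cDom C g' \<longrightarrow>
        cTenA C (cComp C f' f) (cComp C g' g) = cComp C (cTenA C f' g') (cTenA C f g)) \<and>
     (\<forall>a\<in>cObj C. \<forall>b\<in>cObj C. \<forall>c\<in>cObj C.
        cTen C (cTen C a b) c = cTen C a (cTen C b c)) \<and>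
     (\<forall>f\<in>cArr C. \<forall>g\<in>cArr C. \<forall>h\<in>cArr C.
        cTenA C (cTenA C f g) h = cTenA C f (cTenA C g h)) \<and>
     (\<forall>a\<in>cObj C. cTen C (cUnit C) a = a \<and> cTen C a (cUnit C) = a) \<and>
     (\<forall>f\<in>cArr C. cTenA C (cId C (cUnit C)) f = f \<and> cTenA C f (cId C (cUnit C)) = f)"

text \<open>Left closed: (cHom X Y, cEv X Y) is a universal arrow from  ? \<otimes> X  to Y,
i.e. ? \<otimes> X is left adjoint to [X,?]^l with counit ev^X.\<close>
definition left_closed :: "('o, 'm, 'z) lcmc_scheme \<Rightarrow> bool" where
  "left_closed C \<longleftrightarrow> strict_monoidal C \<and>
     (\<forall>X\<in>cObj C. \<forall>Y\<in>cObj C.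
        cHom C X Y \<in> cObj C \<and>
        cEv C X Y \<in> hom C (cTen C (cHom C X Y) X) Y \<and>
        (\<forall>Z\<in>cObj C. \<forall>f\<in>hom C (cTen C Z X) Y.
           \<exists>!g. g \<in> hom C Z (cHom C X Y) \<and> cComp C (cEv C X Y) (cTenA C g (cId C X)) = f))"

definition left_autonomous :: "('o, 'm, 'z) lcmc_scheme \<Rightarrow> bool" where
  "left_autonomous C \<longleftrightarrow> strict_monoidal C \<and>
     (\<forall>X\<in>cObj C. \<exists>Xv e c. Xv \<in> cObj C \<and>
        e \<in> hom C (cTen C Xv X) (cUnit C) \<and>
        c \<in> hom C (cUnit C) (cTen C X Xv) \<and>
        cComp C (cTenA C (cId C X) e) (cTenA C c (cId C X)) = cId C X \<and>
        cComp C (cTenA C e (cId C Xv)) (cTenA C (cId C Xv) c) = cId C Xv)"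

text \<open>A functor together with monoidal structure maps U_2(A,B) and U_0.\<close>
record ('o1, 'm1, 'o2, 'm2) mfun =
  fObj  :: "'o1 \<Rightarrow> 'o2"
  fArr  :: "'m1 \<Rightarrow> 'm2"
  fTwo  :: "'o1 \<Rightarrow> 'o1 \<Rightarrow> 'm2"
  fZero :: "'m2"

definition is_functor ::
  "('o1, 'm1, 'z1) lcmc_scheme \<Rightarrow> ('o2, 'm2, 'z2) lcmc_scheme \<Rightarrow> ('o1, 'm1, 'o2, 'm2, 'z3) mfun_scheme \<Rightarrow> bool" where
  "is_functor D C U \<longleftrightarrow>
     (\<forall>a\<in>cObj D. fObj U a \<in> cObj C) \<and>
     (\<forall>f\<in>cArr D. fArr U f \<in> hom C (fObj U (cDom D f)) (fObj U (cCod D f))) \<and>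
     (\<forall>a\<in>cObj D. fArr U (cId D a) = cId C (fObj U a)) \<and>
     (\<forall>f\<in>cArr D. \<forall>g\<in>cArr D. cCod D f = cDom D g \<longrightarrow>
        fArr U (cComp D g f) = cComp C (fArr U g) (fArr U f))"

definition strong_monoidal_functor ::
  "('o1, 'm1, 'z1) lcmc_scheme \<Rightarrow> ('o2, 'm2, 'z2) lcmc_scheme \<Rightarrow> ('o1, 'm1, 'o2, 'm2, 'z3) mfun_scheme \<Rightarrow> bool" where
  "strong_monoidal_functor D C U \<longleftrightarrow>
     strict_monoidal D \<and> strict_monoidal C \<and> is_functor D C U \<and>
     (\<forall>A\<in>cObj D. \<forall>B\<in>cObj D.
        fTwo U A B \<in> hom C (cTen C (fObj U A) (fObj U B)) (fObj U (cTen D A B)) \<and>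
        iso C (fTwo U A B)) \<and>
     fZero U \<in> hom C (cUnit C) (fObj U (cUnit D)) \<and> iso C (fZero U) \<and>
     (\<forall>f\<in>cArr D. \<forall>g\<in>cArr D.
        cComp C (fTwo U (cCod D f) (cCod D g)) (cTenA C (fArr U f) (fArr U g))
        = cComp C (fArr U (cTenA D f g)) (fTwo U (cDom D f) (cDom D g))) \<and>
     (\<forall>A\<in>cObj D. \<forall>B\<in>cObj D. \<forall>E\<in>cObj D.
        cComp C (fTwo U (cTen D A B) E) (cTenA C (fTwo U A B) (cId C (fObj U E)))
        = cComp C (fTwo U A (cTen D B E)) (cTenA C (cId C (fObj U A)) (fTwo U B E))) \<and>
     (\<forall>A\<in>cObj D.
        cComp C (fTwo U (cUnit D) A) (cTenA C (fZero U) (cId C (fObj U A))) = cId C (fObj U A) \<and>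
        cComp C (fTwo U A (cUnit D)) (cTenA C (cId C (fObj U A)) (fZero U)) = cId C (fObj U A))"

definition closed_comparison ::
  "('o1, 'm1, 'z1) lcmc_scheme \<Rightarrow> ('o2, 'm2, 'z2) lcmc_scheme \<Rightarrow> ('o1, 'm1, 'o2, 'm2, 'z3) mfun_scheme
   \<Rightarrow> 'o1 \<Rightarrow> 'o1 \<Rightarrow> 'm2" where
  "closed_comparison D C U X Y =
     (THE g. g \<in> hom C (fObj U (cHom D X Y)) (cHom C (fObj U X) (fObj U Y)) \<and>
        cComp C (cEv C (fObj U X) (fObj U Y)) (cTenA C g (cId C (fObj U X)))
        = cComp C (fArr U (cEv D X Y)) (fTwo U (cHom D X Y) X))"

definition left_closed_functor ::
  "('o1, 'm1, 'z1) lcmc_scheme \<Rightarrow> ('o2, 'm2, 'z2) lcmc_scheme \<Rightarrow> ('o1, 'm1, 'o2, 'm2, 'z3) mfun_scheme \<Rightarrow> bool" where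
  "left_closed_functor D C U \<longleftrightarrow>
     (\<forall>X\<in>cObj D. \<forall>Y\<in>cObj D. iso C (closed_comparison D C U X Y))"

definition conservative ::
  "('o1, 'm1, 'z1) lcmc_scheme \<Rightarrow> ('o2, 'm2, 'z2) lcmc_scheme \<Rightarrow> ('o1, 'm1, 'o2, 'm2, 'z3) mfun_scheme \<Rightarrow> bool" where
  "conservative D C U \<longleftrightarrow> (\<forall>f\<in>cArr D. iso C (fArr U f) \<longrightarrow> iso D f)"

end

theory Submission
  imports Defs
begin

(* For an object X of a left closed category put V = [X,I]^l and
   E = [X,X]^l, and let c : X \<otimes> V \<rightarrow> E be the mate of X \<otimes> ev : X \<otimes> V \<otimes> X \<rightarrow> X.
   Then X has a left dual iff c is invertible: if c is invertible, c^-1 applied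
   to the name I \<rightarrow> E of the identity is a coevaluation for (V, ev); conversely
   if X has a left dual, then [X,I]^l with its evaluation is one too, and the
   mate c has the explicit inverse (ev^X \<otimes> V)(E \<otimes> coev).  A strong monoidal
   functor carries the defining equation of c to the corresponding equation in C,
   and the left closedness of U identifies U[X,I]^l and U[X,X]^l with the
   internal homs of UX.  Hence Uc is, up to isomorphisms, the mate belonging
   to UX in the left autonomous category C, so Uc is invertible; conservativity
   makes c invertible and X acquires a left dual. *)

locale strict_monoidal_cat = fixes C :: "('o,'m,'z) lcmc_scheme"
  assumes sm: "strict_monoidal C"
begin

abbreviation cmp (infixr "\<cdot>" 55) where "g \<cdot> f \<equiv> cComp C g f"
abbreviation tA (infixr "\<otimes>" 60) where "f \<otimes> g \<equiv> cTenA C f g"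
abbreviation tO (infixr "\<odot>" 60) where "a \<odot> b \<equiv> cTen C a b"
abbreviation I where "I \<equiv> cUnit C"
abbreviation idm where "idm a \<equiv> cId C a"
abbreviation Hom where "Hom a b \<equiv> hom C a b"

lemma category: "category C"
  using sm unfolding strict_monoidal_def by simp

lemma hom_ob: "f \<in> Hom a b \<Longrightarrow> a \<in> cObj C \<and> b \<in> cObj C"
  using category unfolding category_def hom_def by auto

lemma unit_ob[simp,intro]: "I \<in> cObj C"
  using sm unfolding strict_monoidal_def by simp

lemma tO_ob[simp,intro]: "a \<in> cObj C \<Longrightarrow> b \<in> cObj C \<Longrightarrow> a \<odot> b \<in> cObj C"
  using sm unfolding strict_monoidal_def by simp

lemma id_hom[intro]: "a \<in> cObj C \<Longrightarrow> idm a \<in> Hom a a"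
  using category unfolding category_def by simp

lemma comp_hom: "f \<in> Hom a b \<Longrightarrow> g \<in> Hom b c \<Longrightarrow> g \<cdot> f \<in> Hom a c"
  using category unfolding category_def hom_def by auto

lemma ten_hom: "f \<in> Hom a b \<Longrightarrow> g \<in> Hom c d \<Longrightarrow> f \<otimes> g \<in> Hom (a \<odot> c) (b \<odot> d)"
  using sm unfolding strict_monoidal_def hom_def by auto

lemma tO_assoc[simp]: "a \<in> cObj C \<Longrightarrow> b \<in> cObj C \<Longrightarrow> c \<in> cObj C \<Longrightarrow> (a \<odot> b) \<odot> c = a \<odot> (b \<odot> c)"
  using sm unfolding strict_monoidal_def by simp

lemma tO_unit[simp]: "a \<in> cObj C \<Longrightarrow> I \<odot> a = a" "a \<in> cObj C \<Longrightarrow> a \<odot> I = a"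
  using sm unfolding strict_monoidal_def by simp_all

lemma comp_id_l[simp]: "f \<in> Hom a b \<Longrightarrow> idm b \<cdot> f = f"
  using category unfolding category_def hom_def by auto

lemma comp_id_r[simp]: "f \<in> Hom a b \<Longrightarrow> f \<cdot> idm a = f"
  using category unfolding category_def hom_def by auto

lemma comp_assoc: "f \<in> Hom a b \<Longrightarrow> g \<in> Hom b c \<Longrightarrow> h \<in> Hom c d \<Longrightarrow> h \<cdot> (g \<cdot> f) = (h \<cdot> g) \<cdot> f"
  using category unfolding category_def hom_def by auto

lemma ten_id[simp]: "a \<in> cObj C \<Longrightarrow> b \<in> cObj C \<Longrightarrow> idm a \<otimes> idm b = idm (a \<odot> b)"
  using sm unfolding strict_monoidal_def by simp

lemma interchange: "f \<in> Hom a b \<Longrightarrow> f' \<in> Hom b c \<Longrightarrow> g \<in> Hom a' b' \<Longrightarrow> g' \<in> Hom b' c' \<Longrightarrow>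
    (f' \<cdot> f) \<otimes> (g' \<cdot> g) = (f' \<otimes> g') \<cdot> (f \<otimes> g)"
  using sm unfolding strict_monoidal_def hom_def by auto

lemma tA_assoc: "f \<in> Hom a b \<Longrightarrow> g \<in> Hom c d \<Longrightarrow> h \<in> Hom x y \<Longrightarrow> (f \<otimes> g) \<otimes> h = f \<otimes> (g \<otimes> h)"
  using sm unfolding strict_monoidal_def hom_def by auto

lemma tA_unit: "f \<in> Hom a b \<Longrightarrow> idm I \<otimes> f = f" "f \<in> Hom a b \<Longrightarrow> f \<otimes> idm I = f"
  using sm unfolding strict_monoidal_def hom_def by auto

lemma ten_split1:
  assumes f: "f \<in> Hom a b" and g: "g \<in> Hom c d"
  shows "f \<otimes> g = (f \<otimes> idm d) \<cdot> (idm a \<otimes> g)"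
proof -
  have "a \<in> cObj C" "d \<in> cObj C" using f g hom_ob by auto
  then show ?thesis using interchange[OF id_hom f g id_hom] f g by simp
qed

lemma ten_split2:
  assumes f: "f \<in> Hom a b" and g: "g \<in> Hom c d"
  shows "f \<otimes> g = (idm b \<otimes> g) \<cdot> (f \<otimes> idm c)"
proof -
  have "b \<in> cObj C" "c \<in> cObj C" using f g hom_ob by auto
  then show ?thesis using interchange[OF f id_hom id_hom g] f g by simp
qed

lemma comp_ten_idr:
  assumes f: "f \<in> Hom a b" and g: "g \<in> Hom b c" and x: "x \<in> cObj C"
  shows "(g \<cdot> f) \<otimes> idm x = (g \<otimes> idm x) \<cdot> (f \<otimes> idm x)"
  using interchange[OF f g id_hom[OF x] id_hom[OF x]] id_hom[OF x] by simp

lemma comp_ten_idl: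
  assumes f: "f \<in> Hom a b" and g: "g \<in> Hom b c" and x: "x \<in> cObj C"
  shows "idm x \<otimes> (g \<cdot> f) = (idm x \<otimes> g) \<cdot> (idm x \<otimes> f)"
  using interchange[OF id_hom[OF x] id_hom[OF x] f g] id_hom[OF x] by simp

lemma iso_intro: "f \<in> Hom a b \<Longrightarrow> g \<in> Hom b a \<Longrightarrow> g \<cdot> f = idm a \<Longrightarrow> f \<cdot> g = idm b \<Longrightarrow> iso C f"
  unfolding iso_def hom_def by auto

lemma iso_inv: "iso C f \<Longrightarrow> f \<in> Hom a b \<Longrightarrow> \<exists>g. g \<in> Hom b a \<and> g \<cdot> f = idm a \<and> f \<cdot> g = idm b"
  unfolding iso_def hom_def by auto

lemma iso_comp:
  assumes f: "f \<in> Hom a b" and g: "g \<in> Hom b c" and isf: "iso C f" and isg: "iso C g"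
  shows "iso C (g \<cdot> f)"
proof -
  obtain f' where f': "f' \<in> Hom b a" "f' \<cdot> f = idm a" "f \<cdot> f' = idm b" using iso_inv[OF isf f] by blast
  obtain g' where g': "g' \<in> Hom c b" "g' \<cdot> g = idm b" "g \<cdot> g' = idm c" using iso_inv[OF isg g] by blast
  have "(f' \<cdot> g') \<cdot> (g \<cdot> f) = f' \<cdot> (g' \<cdot> (g \<cdot> f))" using comp_assoc[OF comp_hom[OF f g] g'(1) f'(1)] by simp
  also have "\<dots> = f' \<cdot> f" using comp_assoc[OF f g g'(1)] g'(2) f by simp
  finally have 1: "(f' \<cdot> g') \<cdot> (g \<cdot> f) = idm a" using f'(2) by simp
  have "(g \<cdot> f) \<cdot> (f' \<cdot> g') = g \<cdot> (f \<cdot> (f' \<cdot> g'))" using comp_assoc[OF comp_hom[OF g'(1) f'(1)] f g] by simp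
  also have "\<dots> = g \<cdot> g'" using comp_assoc[OF g'(1) f'(1) f] f'(3) g'(1) by simp
  finally have 2: "(g \<cdot> f) \<cdot> (f' \<cdot> g') = idm c" using g'(3) by simp
  show ?thesis by (rule iso_intro[OF comp_hom[OF f g] comp_hom[OF g'(1) f'(1)] 1 2])
qed

lemma iso_cancel:
  assumes a: "a \<in> Hom y z" and b: "b \<in> Hom x y" and c: "c \<in> Hom w x"
    and isa: "iso C a" and isc: "iso C c" and isabc: "iso C (a \<cdot> b \<cdot> c)"
  shows "iso C b"
proof -
  obtain a' where a': "a' \<in> Hom z y" "a' \<cdot> a = idm y" "a \<cdot> a' = idm z" using iso_inv[OF isa a] by blast
  obtain c' where c': "c' \<in> Hom x w" "c' \<cdot> c = idm w" "c \<cdot> c' = idm x" using iso_inv[OF isc c] by blast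
  have ia': "iso C a'" by (rule iso_intro[OF a'(1) a a'(3) a'(2)])
  have ic': "iso C c'" by (rule iso_intro[OF c'(1) c c'(3) c'(2)])
  have abc: "a \<cdot> b \<cdot> c \<in> Hom w z" by (rule comp_hom[OF comp_hom[OF c b] a])
  have "a' \<cdot> ((a \<cdot> b \<cdot> c) \<cdot> c') = a' \<cdot> (a \<cdot> (b \<cdot> (c \<cdot> c')))"
    using comp_assoc[OF c'(1) comp_hom[OF c b] a] comp_assoc[OF c'(1) c b] by simp
  also have "\<dots> = b" using c'(3) b comp_assoc[OF b a a'(1)] a'(2) by simp
  finally have eq: "a' \<cdot> ((a \<cdot> b \<cdot> c) \<cdot> c') = b" .
  have "iso C (a' \<cdot> ((a \<cdot> b \<cdot> c) \<cdot> c'))"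
    by (rule iso_comp[OF comp_hom[OF c'(1) abc] a'(1) iso_comp[OF c'(1) abc ic' isabc] ia'])
  thus ?thesis using eq by simp
qed

lemma iso_mono: "iso C h \<Longrightarrow> h \<in> Hom W V \<Longrightarrow> x \<in> Hom Z W \<Longrightarrow> y \<in> Hom Z W \<Longrightarrow> h \<cdot> x = h \<cdot> y \<Longrightarrow> x = y"
proof -
  assume ih: "iso C h" and h: "h \<in> Hom W V" and x: "x \<in> Hom Z W" and y: "y \<in> Hom Z W" and eq: "h \<cdot> x = h \<cdot> y"
  obtain h' where h': "h' \<in> Hom V W" "h' \<cdot> h = idm W" using iso_inv[OF ih h] by blast
  have "x = (h' \<cdot> h) \<cdot> x" using h'(2) x by simp
  also have "\<dots> = h' \<cdot> (h \<cdot> x)" using comp_assoc[OF x h h'(1)] by simp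
  also have "\<dots> = (h' \<cdot> h) \<cdot> y" using eq comp_assoc[OF y h h'(1)] by simp
  also have "\<dots> = y" using h'(2) y by simp
  finally show ?thesis .
qed

definition internal_hom :: "'o \<Rightarrow> 'o \<Rightarrow> 'o \<Rightarrow> 'm \<Rightarrow> bool" where
  "internal_hom A B W e \<longleftrightarrow> W \<in> cObj C \<and> e \<in> Hom (W \<odot> A) B \<and>
     (\<forall>Z\<in>cObj C. \<forall>f\<in>Hom (Z \<odot> A) B. \<exists>!g. g \<in> Hom Z W \<and> e \<cdot> (g \<otimes> idm A) = f)"

definition left_dual :: "'o \<Rightarrow> 'o \<Rightarrow> 'm \<Rightarrow> 'm \<Rightarrow> bool" where
  "left_dual A W e k \<longleftrightarrow> W \<in> cObj C \<and> e \<in> Hom (W \<odot> A) I \<and> k \<in> Hom I (A \<odot> W) \<and>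
     (idm A \<otimes> e) \<cdot> (k \<otimes> idm A) = idm A \<and> (e \<otimes> idm W) \<cdot> (idm W \<otimes> k) = idm W"

lemma left_autonomous_iff: "left_autonomous C \<longleftrightarrow> (\<forall>A\<in>cObj C. \<exists>W e k. left_dual A W e k)"
  using sm unfolding left_autonomous_def left_dual_def by blast

lemma internal_hom_D: "internal_hom A B W e \<Longrightarrow> W \<in> cObj C \<and> e \<in> Hom (W \<odot> A) B"
  unfolding internal_hom_def by simp

lemma internal_hom_exists:
  assumes u: "internal_hom A B W e" and Z: "Z \<in> cObj C" and f: "f \<in> Hom (Z \<odot> A) B"
  shows "\<exists>g. g \<in> Hom Z W \<and> e \<cdot> (g \<otimes> idm A) = f"
  using u Z f unfolding internal_hom_def by blast

lemma internal_hom_unique: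
  assumes u: "internal_hom A B W e" and A: "A \<in> cObj C" and g: "g \<in> Hom Z W" and g': "g' \<in> Hom Z W"
    and eq: "e \<cdot> (g \<otimes> idm A) = e \<cdot> (g' \<otimes> idm A)"
  shows "g = g'"
proof -
  have Z: "Z \<in> cObj C" using g hom_ob by auto
  have e: "e \<in> Hom (W \<odot> A) B" using internal_hom_D[OF u] by simp
  have "e \<cdot> (g \<otimes> idm A) \<in> Hom (Z \<odot> A) B"
    by (rule comp_hom[OF ten_hom[OF g id_hom[OF A]] e])
  with u Z have "\<exists>!h. h \<in> Hom Z W \<and> e \<cdot> (h \<otimes> idm A) = e \<cdot> (g \<otimes> idm A)"
    unfolding internal_hom_def by simp
  then show ?thesis using g g' eq by metis
qed

text \<open>The mate c : A \<otimes> [A,I]^l \<rightarrow> [A,A]^l of A \<otimes> ev, characterised by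
  ev^A \<cdot> (c \<otimes> A) = A \<otimes> ev; its invertibility decides whether A has a left dual.\<close>

lemma mate_exists:
  assumes A: "A \<in> cObj C" and uA: "internal_hom A A E v" and u1: "internal_hom A I V e"
  shows "\<exists>c. c \<in> Hom (A \<odot> V) E \<and> v \<cdot> (c \<otimes> idm A) = idm A \<otimes> e"
proof -
  have V: "V \<in> cObj C" and e: "e \<in> Hom (V \<odot> A) I" using internal_hom_D[OF u1] by auto
  have "idm A \<otimes> e \<in> Hom ((A \<odot> V) \<odot> A) A" using ten_hom[OF id_hom[OF A] e] A V by simp
  then show ?thesis using internal_hom_exists[OF uA] A V by simp
qed

text \<open>For an internal hom [A,I]^l the second zigzag identity follows from the
  first: both sides of it have the same image under the evaluation.\<close>

lemma internal_hom_left_dual: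
  assumes A: "A \<in> cObj C" and u: "internal_hom A I W e" and k: "k \<in> Hom I (A \<odot> W)"
    and z1: "(idm A \<otimes> e) \<cdot> (k \<otimes> idm A) = idm A"
  shows "left_dual A W e k"
proof -
  have W: "W \<in> cObj C" and e: "e \<in> Hom (W \<odot> A) I" using internal_hom_D[OF u] by auto
  have WA: "W \<odot> A \<in> cObj C" using W A by simp
  have t1: "idm W \<otimes> k \<in> Hom W (W \<odot> A \<odot> W)" using ten_hom[OF id_hom[OF W] k] W A by simp
  have t2: "e \<otimes> idm W \<in> Hom (W \<odot> A \<odot> W) W" using ten_hom[OF e id_hom[OF W]] W A by simp
  have L: "(e \<otimes> idm W) \<cdot> (idm W \<otimes> k) \<in> Hom W W" by (rule comp_hom[OF t1 t2])
  have t3: "k \<otimes> idm A \<in> Hom A (A \<odot> W \<odot> A)" using ten_hom[OF k id_hom[OF A]] W A by simp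
  have t4: "idm A \<otimes> e \<in> Hom (A \<odot> W \<odot> A) A" using ten_hom[OF id_hom[OF A] e] W A by simp
  have t5: "idm W \<otimes> (k \<otimes> idm A) \<in> Hom (W \<odot> A) (W \<odot> A \<odot> W \<odot> A)"
    using ten_hom[OF id_hom[OF W] t3] W A by simp
  have t6: "e \<otimes> idm (W \<odot> A) \<in> Hom (W \<odot> A \<odot> W \<odot> A) (W \<odot> A)"
    using ten_hom[OF e id_hom[OF WA]] W A by simp
  have t7: "idm (W \<odot> A) \<otimes> e \<in> Hom (W \<odot> A \<odot> W \<odot> A) (W \<odot> A)"
    using ten_hom[OF id_hom[OF WA] e] W A by simp
  have ee1: "e \<cdot> (e \<otimes> idm (W \<odot> A)) = e \<otimes> e"
    using ten_split2[OF e e] tA_unit(1)[OF e] by simp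
  have ee2: "e \<cdot> (idm (W \<odot> A) \<otimes> e) = e \<otimes> e"
    using ten_split1[OF e e] tA_unit(2)[OF e] by simp
  have "e \<cdot> (((e \<otimes> idm W) \<cdot> (idm W \<otimes> k)) \<otimes> idm A)
      = e \<cdot> (((e \<otimes> idm W) \<otimes> idm A) \<cdot> ((idm W \<otimes> k) \<otimes> idm A))"
    using comp_ten_idr[OF t1 t2 A] by simp
  also have "\<dots> = e \<cdot> ((e \<otimes> idm (W \<odot> A)) \<cdot> (idm W \<otimes> (k \<otimes> idm A)))"
    using tA_assoc[OF e id_hom[OF W] id_hom[OF A]] tA_assoc[OF id_hom[OF W] k id_hom[OF A]] W A by simp
  also have "\<dots> = (e \<cdot> (e \<otimes> idm (W \<odot> A))) \<cdot> (idm W \<otimes> (k \<otimes> idm A))"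
    by (rule comp_assoc[OF t5 t6 e])
  also have "\<dots> = (e \<cdot> (idm (W \<odot> A) \<otimes> e)) \<cdot> (idm W \<otimes> (k \<otimes> idm A))"
    using ee1 ee2 by simp
  also have "\<dots> = e \<cdot> ((idm (W \<odot> A) \<otimes> e) \<cdot> (idm W \<otimes> (k \<otimes> idm A)))"
    by (rule comp_assoc[OF t5 t7 e, symmetric])
  also have "\<dots> = e \<cdot> ((idm W \<otimes> (idm A \<otimes> e)) \<cdot> (idm W \<otimes> (k \<otimes> idm A)))"
    using tA_assoc[OF id_hom[OF W] id_hom[OF A] e] W A by simp
  also have "\<dots> = e \<cdot> (idm W \<otimes> ((idm A \<otimes> e) \<cdot> (k \<otimes> idm A)))"
    using comp_ten_idl[OF t3 t4 W] by simp
  also have "\<dots> = e \<cdot> (idm W \<otimes> idm A)" using z1 by simp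
  finally have "e \<cdot> (((e \<otimes> idm W) \<cdot> (idm W \<otimes> k)) \<otimes> idm A) = e \<cdot> (idm W \<otimes> idm A)" .
  then have "(e \<otimes> idm W) \<cdot> (idm W \<otimes> k) = idm W"
    using internal_hom_unique[OF u A L id_hom[OF W]] by simp
  then show ?thesis using W e k z1 unfolding left_dual_def by simp
qed

text \<open>If A has some left dual, then every internal hom [A,I]^l with its evaluation
  is a left dual of A: the coevaluation is transported along the comparison map
  from the given dual into [A,I]^l.\<close>

lemma internal_hom_is_left_dual:
  assumes A: "A \<in> cObj C" and dual0: "left_dual A W0 e0 k0" and u: "internal_hom A I W e"
  shows "\<exists>k. left_dual A W e k"
proof -
  have W: "W \<in> cObj C" and e: "e \<in> Hom (W \<odot> A) I" using internal_hom_D[OF u] by auto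
  have W0: "W0 \<in> cObj C" and e0: "e0 \<in> Hom (W0 \<odot> A) I" and k0: "k0 \<in> Hom I (A \<odot> W0)"
    and z1: "(idm A \<otimes> e0) \<cdot> (k0 \<otimes> idm A) = idm A"
    using dual0 unfolding left_dual_def by auto
  obtain h where h: "h \<in> Hom W0 W" "e \<cdot> (h \<otimes> idm A) = e0" using internal_hom_exists[OF u W0 e0] by blast
  have t1: "idm A \<otimes> h \<in> Hom (A \<odot> W0) (A \<odot> W)" using ten_hom[OF id_hom[OF A] h(1)] .
  have k: "(idm A \<otimes> h) \<cdot> k0 \<in> Hom I (A \<odot> W)" by (rule comp_hom[OF k0 t1])
  have t2: "k0 \<otimes> idm A \<in> Hom A (A \<odot> W0 \<odot> A)" using ten_hom[OF k0 id_hom[OF A]] A W0 by simp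
  have t3: "idm A \<otimes> (h \<otimes> idm A) \<in> Hom (A \<odot> W0 \<odot> A) (A \<odot> W \<odot> A)"
    using ten_hom[OF id_hom[OF A] ten_hom[OF h(1) id_hom[OF A]]] .
  have t4: "idm A \<otimes> e \<in> Hom (A \<odot> W \<odot> A) A" using ten_hom[OF id_hom[OF A] e] A W by simp
  have "(idm A \<otimes> e) \<cdot> (((idm A \<otimes> h) \<cdot> k0) \<otimes> idm A)
      = (idm A \<otimes> e) \<cdot> (((idm A \<otimes> h) \<otimes> idm A) \<cdot> (k0 \<otimes> idm A))"
    using comp_ten_idr[OF k0 t1 A] by simp
  also have "\<dots> = (idm A \<otimes> e) \<cdot> ((idm A \<otimes> (h \<otimes> idm A)) \<cdot> (k0 \<otimes> idm A))"
    using tA_assoc[OF id_hom[OF A] h(1) id_hom[OF A]] by simp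
  also have "\<dots> = ((idm A \<otimes> e) \<cdot> (idm A \<otimes> (h \<otimes> idm A))) \<cdot> (k0 \<otimes> idm A)"
    by (rule comp_assoc[OF t2 t3 t4])
  also have "\<dots> = (idm A \<otimes> e0) \<cdot> (k0 \<otimes> idm A)"
    using comp_ten_idl[OF ten_hom[OF h(1) id_hom[OF A]] e A] h(2) by simp
  finally have zz: "(idm A \<otimes> e) \<cdot> (((idm A \<otimes> h) \<cdot> k0) \<otimes> idm A) = idm A" using z1 by simp
  show ?thesis using internal_hom_left_dual[OF A u k zz] by blast
qed


lemma internal_hom_transport_object:
  assumes A: "A \<in> cObj C" and u: "internal_hom A B V ev" and h: "h \<in> Hom W V" and ih: "iso C h"
  shows "internal_hom A B W (ev \<cdot> (h \<otimes> idm A))"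
proof -
  have ev: "ev \<in> Hom (V \<odot> A) B" using internal_hom_D[OF u] by auto
  have W: "W \<in> cObj C" using hom_ob[OF h] by simp
  have hA: "h \<otimes> idm A \<in> Hom (W \<odot> A) (V \<odot> A)" by (rule ten_hom[OF h id_hom[OF A]])
  obtain h' where h': "h' \<in> Hom V W" "h \<cdot> h' = idm V" using iso_inv[OF ih h] by blast
  have factor: "(ev \<cdot> (h \<otimes> idm A)) \<cdot> (g \<otimes> idm A) = ev \<cdot> ((h \<cdot> g) \<otimes> idm A)"
    if g: "g \<in> Hom Z W" for g Z
    using comp_assoc[OF ten_hom[OF g id_hom[OF A]] hA ev] comp_ten_idr[OF g h A] by simp
  show ?thesis unfolding internal_hom_def
  proof (intro conjI ballI)
    show "W \<in> cObj C" by (rule W)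
    show "ev \<cdot> (h \<otimes> idm A) \<in> Hom (W \<odot> A) B" by (rule comp_hom[OF hA ev])
    fix Z f assume Z: "Z \<in> cObj C" and f: "f \<in> Hom (Z \<odot> A) B"
    obtain g0 where g0: "g0 \<in> Hom Z V" "ev \<cdot> (g0 \<otimes> idm A) = f"
      using internal_hom_exists[OF u Z f] by blast
    have g: "h' \<cdot> g0 \<in> Hom Z W" by (rule comp_hom[OF g0(1) h'(1)])
    have hg: "h \<cdot> (h' \<cdot> g0) = g0" using comp_assoc[OF g0(1) h'(1) h] h'(2) g0(1) by simp
    show "\<exists>!g. g \<in> Hom Z W \<and> (ev \<cdot> (h \<otimes> idm A)) \<cdot> (g \<otimes> idm A) = f"
    proof (rule ex1I[of _ "h' \<cdot> g0"])
      show "h' \<cdot> g0 \<in> Hom Z W \<and> (ev \<cdot> (h \<otimes> idm A)) \<cdot> ((h' \<cdot> g0) \<otimes> idm A) = f"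
        using g factor[OF g] hg g0(2) by simp
    next
      fix g1 assume g1: "g1 \<in> Hom Z W \<and> (ev \<cdot> (h \<otimes> idm A)) \<cdot> (g1 \<otimes> idm A) = f"
      have "ev \<cdot> ((h \<cdot> g1) \<otimes> idm A) = ev \<cdot> ((h \<cdot> (h' \<cdot> g0)) \<otimes> idm A)"
        using g1 factor[of g1 Z] hg g0(2) by simp
      then have "h \<cdot> g1 = h \<cdot> (h' \<cdot> g0)"
        using internal_hom_unique[OF u A comp_hom[OF _ h] comp_hom[OF g h]] g1 by blast
      then show "g1 = h' \<cdot> g0" by (rule iso_mono[OF ih h conjunct1[OF g1] g])
    qed
  qed
qed

lemma internal_hom_transport_target:
  assumes A: "A \<in> cObj C" and u: "internal_hom A B V ev" and uu: "uu \<in> Hom B B'" and iu: "iso C uu"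
  shows "internal_hom A B' V (uu \<cdot> ev)"
proof -
  have V: "V \<in> cObj C" and ev: "ev \<in> Hom (V \<odot> A) B" using internal_hom_D[OF u] by auto
  obtain u' where u': "u' \<in> Hom B' B" "u' \<cdot> uu = idm B" "uu \<cdot> u' = idm B'"
    using iso_inv[OF iu uu] by blast
  have mates: "(uu \<cdot> ev) \<cdot> (g \<otimes> idm A) = f \<longleftrightarrow> ev \<cdot> (g \<otimes> idm A) = u' \<cdot> f"
    if g: "g \<in> Hom Z V" and f: "f \<in> Hom (Z \<odot> A) B'" for g Z f
  proof -
    have x: "ev \<cdot> (g \<otimes> idm A) \<in> Hom (Z \<odot> A) B" by (rule comp_hom[OF ten_hom[OF g id_hom[OF A]] ev])
    have "(uu \<cdot> ev) \<cdot> (g \<otimes> idm A) = uu \<cdot> (ev \<cdot> (g \<otimes> idm A))"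
      using comp_assoc[OF ten_hom[OF g id_hom[OF A]] ev uu] by simp
    moreover have "u' \<cdot> (uu \<cdot> (ev \<cdot> (g \<otimes> idm A))) = ev \<cdot> (g \<otimes> idm A)"
      using comp_assoc[OF x uu u'(1)] u'(2) x by simp
    moreover have "uu \<cdot> (u' \<cdot> f) = f" using comp_assoc[OF f u'(1) uu] u'(3) f by simp
    ultimately show ?thesis by metis
  qed
  show ?thesis unfolding internal_hom_def
  proof (intro conjI ballI)
    show "V \<in> cObj C" by (rule V)
    show "uu \<cdot> ev \<in> Hom (V \<odot> A) B'" by (rule comp_hom[OF ev uu])
    fix Z f assume Z: "Z \<in> cObj C" and f: "f \<in> Hom (Z \<odot> A) B'"
    have "\<exists>!g. g \<in> Hom Z V \<and> ev \<cdot> (g \<otimes> idm A) = u' \<cdot> f"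
      using u Z comp_hom[OF f u'(1)] unfolding internal_hom_def by simp
    then show "\<exists>!g. g \<in> Hom Z V \<and> (uu \<cdot> ev) \<cdot> (g \<otimes> idm A) = f"
      using mates[OF _ f] by metis
  qed
qed

text \<open>For a left dual (W, e, k) of A, let n : A \<otimes> W \<rightarrow> [A,A]^l be the mate of
  A \<otimes> e.  The next two lemmas show that (v \<otimes> W) \<cdot> ([A,A]^l \<otimes> k) is a two-sided
  inverse of n; the first uses the first zigzag identity and the universal
  property, the second uses the second zigzag identity.\<close>

lemma mate_of_dual_section:
  assumes A: "A \<in> cObj C" and dual: "left_dual A W e k"
    and u: "internal_hom A A E v" and n: "n \<in> Hom (A \<odot> W) E"
    and eq: "v \<cdot> (n \<otimes> idm A) = idm A \<otimes> e"
  shows "n \<cdot> ((v \<otimes> idm W) \<cdot> (idm E \<otimes> k)) = idm E"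
proof -
  have W: "W \<in> cObj C" and e: "e \<in> Hom (W \<odot> A) I" and k: "k \<in> Hom I (A \<odot> W)"
    and z1: "(idm A \<otimes> e) \<cdot> (k \<otimes> idm A) = idm A"
    using dual unfolding left_dual_def by auto
  have E: "E \<in> cObj C" and v: "v \<in> Hom (E \<odot> A) A" using internal_hom_D[OF u] by auto
  have EA: "E \<odot> A \<in> cObj C" and WA: "W \<odot> A \<in> cObj C" using E A W by auto
  have t1: "idm E \<otimes> k \<in> Hom E (E \<odot> A \<odot> W)" using ten_hom[OF id_hom[OF E] k] E A W by simp
  have t2: "v \<otimes> idm W \<in> Hom (E \<odot> A \<odot> W) (A \<odot> W)" using ten_hom[OF v id_hom[OF W]] E A W by simp
  define d where "d = (v \<otimes> idm W) \<cdot> (idm E \<otimes> k)"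
  have d: "d \<in> Hom E (A \<odot> W)" unfolding d_def by (rule comp_hom[OF t1 t2])
  have t3: "k \<otimes> idm A \<in> Hom A (A \<odot> W \<odot> A)" using ten_hom[OF k id_hom[OF A]] W A by simp
  have t4: "idm A \<otimes> e \<in> Hom (A \<odot> W \<odot> A) A" using ten_hom[OF id_hom[OF A] e] W A by simp
  have t5: "idm E \<otimes> (k \<otimes> idm A) \<in> Hom (E \<odot> A) (E \<odot> A \<odot> W \<odot> A)"
    using ten_hom[OF id_hom[OF E] t3] E W A by simp
  have t6: "v \<otimes> idm (W \<odot> A) \<in> Hom (E \<odot> A \<odot> W \<odot> A) (A \<odot> W \<odot> A)"
    using ten_hom[OF v id_hom[OF WA]] E W A by simp
  have t7: "idm (E \<odot> A) \<otimes> e \<in> Hom (E \<odot> A \<odot> W \<odot> A) (E \<odot> A)"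
    using ten_hom[OF id_hom[OF EA] e] E W A by simp
  have nA: "n \<otimes> idm A \<in> Hom (A \<odot> W \<odot> A) (E \<odot> A)" using ten_hom[OF n id_hom[OF A]] W A by simp
  have dA: "d \<otimes> idm A \<in> Hom (E \<odot> A) (A \<odot> W \<odot> A)" using ten_hom[OF d id_hom[OF A]] E W A by simp
  have ve1: "(idm A \<otimes> e) \<cdot> (v \<otimes> idm (W \<odot> A)) = v \<otimes> e"
    using ten_split2[OF v e] by simp
  have ve2: "v \<cdot> (idm (E \<odot> A) \<otimes> e) = v \<otimes> e"
    using ten_split1[OF v e] tA_unit(2)[OF v] by simp
  have "v \<cdot> ((n \<cdot> d) \<otimes> idm A) = v \<cdot> ((n \<otimes> idm A) \<cdot> (d \<otimes> idm A))"
    using comp_ten_idr[OF d n A] by simp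
  also have "\<dots> = (idm A \<otimes> e) \<cdot> (d \<otimes> idm A)"
    using comp_assoc[OF dA nA v] eq by simp
  also have "d \<otimes> idm A = (v \<otimes> idm (W \<odot> A)) \<cdot> (idm E \<otimes> (k \<otimes> idm A))"
    unfolding d_def using comp_ten_idr[OF t1 t2 A] tA_assoc[OF v id_hom[OF W] id_hom[OF A]]
      tA_assoc[OF id_hom[OF E] k id_hom[OF A]] W A by simp
  also have "(idm A \<otimes> e) \<cdot> ((v \<otimes> idm (W \<odot> A)) \<cdot> (idm E \<otimes> (k \<otimes> idm A)))
     = (v \<cdot> (idm (E \<odot> A) \<otimes> e)) \<cdot> (idm E \<otimes> (k \<otimes> idm A))"
    using comp_assoc[OF t5 t6 t4] ve1 ve2 by simp
  also have "\<dots> = v \<cdot> ((idm E \<otimes> (idm A \<otimes> e)) \<cdot> (idm E \<otimes> (k \<otimes> idm A)))"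
    using comp_assoc[OF t5 t7 v] tA_assoc[OF id_hom[OF E] id_hom[OF A] e] E A by simp
  also have "\<dots> = v \<cdot> (idm E \<otimes> idm A)"
    using comp_ten_idl[OF t3 t4 E] z1 by simp
  finally have "v \<cdot> ((n \<cdot> d) \<otimes> idm A) = v \<cdot> (idm E \<otimes> idm A)" .
  then show ?thesis unfolding d_def[symmetric]
    by (rule internal_hom_unique[OF u A comp_hom[OF d n] id_hom[OF E]])
qed

lemma mate_of_dual_retraction:
  assumes A: "A \<in> cObj C" and dual: "left_dual A W e k"
    and u: "internal_hom A A E v" and n: "n \<in> Hom (A \<odot> W) E"
    and eq: "v \<cdot> (n \<otimes> idm A) = idm A \<otimes> e"
  shows "((v \<otimes> idm W) \<cdot> (idm E \<otimes> k)) \<cdot> n = idm (A \<odot> W)"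
proof -
  have W: "W \<in> cObj C" and e: "e \<in> Hom (W \<odot> A) I" and k: "k \<in> Hom I (A \<odot> W)"
    and z2: "(e \<otimes> idm W) \<cdot> (idm W \<otimes> k) = idm W"
    using dual unfolding left_dual_def by auto
  have E: "E \<in> cObj C" and v: "v \<in> Hom (E \<odot> A) A" using internal_hom_D[OF u] by auto
  have AW: "A \<odot> W \<in> cObj C" using A W by auto
  have t1: "idm E \<otimes> k \<in> Hom E (E \<odot> A \<odot> W)" using ten_hom[OF id_hom[OF E] k] E A W by simp
  have t2: "v \<otimes> idm W \<in> Hom (E \<odot> A \<odot> W) (A \<odot> W)" using ten_hom[OF v id_hom[OF W]] E A W by simp
  have nA: "n \<otimes> idm A \<in> Hom (A \<odot> W \<odot> A) (E \<odot> A)" using ten_hom[OF n id_hom[OF A]] W A by simp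
  have t8: "n \<otimes> idm (A \<odot> W) \<in> Hom (A \<odot> W \<odot> A \<odot> W) (E \<odot> A \<odot> W)"
    using ten_hom[OF n id_hom[OF AW]] E A W by simp
  have t9: "idm (A \<odot> W) \<otimes> k \<in> Hom (A \<odot> W) (A \<odot> W \<odot> A \<odot> W)"
    using ten_hom[OF id_hom[OF AW] k] A W by simp
  have t10: "idm W \<otimes> k \<in> Hom W (W \<odot> A \<odot> W)" using ten_hom[OF id_hom[OF W] k] A W by simp
  have t11: "e \<otimes> idm W \<in> Hom (W \<odot> A \<odot> W) W" using ten_hom[OF e id_hom[OF W]] A W by simp
  have nk1: "(idm E \<otimes> k) \<cdot> n = n \<otimes> k"
    using ten_split2[OF n k] tA_unit(2)[OF n] by simp
  have nk2: "(n \<otimes> idm (A \<odot> W)) \<cdot> (idm (A \<odot> W) \<otimes> k) = n \<otimes> k"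
    using ten_split1[OF n k] by simp
  have "((v \<otimes> idm W) \<cdot> (idm E \<otimes> k)) \<cdot> n = (v \<otimes> idm W) \<cdot> ((idm E \<otimes> k) \<cdot> n)"
    using comp_assoc[OF n t1 t2] by simp
  also have "\<dots> = ((v \<otimes> idm W) \<cdot> (n \<otimes> idm (A \<odot> W))) \<cdot> (idm (A \<odot> W) \<otimes> k)"
    using nk1 nk2 comp_assoc[OF t9 t8 t2] by simp
  also have "(v \<otimes> idm W) \<cdot> (n \<otimes> idm (A \<odot> W)) = (v \<cdot> (n \<otimes> idm A)) \<otimes> idm W"
    using comp_ten_idr[OF nA v W] tA_assoc[OF n id_hom[OF A] id_hom[OF W]] A W by simp
  also have "\<dots> = idm A \<otimes> (e \<otimes> idm W)" using eq tA_assoc[OF id_hom[OF A] e id_hom[OF W]] by simp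
  also have "idm (A \<odot> W) \<otimes> k = idm A \<otimes> (idm W \<otimes> k)"
    using tA_assoc[OF id_hom[OF A] id_hom[OF W] k] A W by simp
  also have "(idm A \<otimes> (e \<otimes> idm W)) \<cdot> (idm A \<otimes> (idm W \<otimes> k)) = idm (A \<odot> W)"
    using comp_ten_idl[OF t10 t11 A] z2 A W by simp
  finally show ?thesis .
qed

lemma mate_of_dual_iso:
  assumes A: "A \<in> cObj C" and dual: "left_dual A W e k"
    and u: "internal_hom A A E v" and n: "n \<in> Hom (A \<odot> W) E"
    and eq: "v \<cdot> (n \<otimes> idm A) = idm A \<otimes> e"
  shows "iso C n"
proof -
  have W: "W \<in> cObj C" and k: "k \<in> Hom I (A \<odot> W)" using dual unfolding left_dual_def by auto
  have E: "E \<in> cObj C" and v: "v \<in> Hom (E \<odot> A) A" using internal_hom_D[OF u] by auto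
  have t1: "idm E \<otimes> k \<in> Hom E (E \<odot> A \<odot> W)" using ten_hom[OF id_hom[OF E] k] E A W by simp
  have t2: "v \<otimes> idm W \<in> Hom (E \<odot> A \<odot> W) (A \<odot> W)" using ten_hom[OF v id_hom[OF W]] E A W by simp
  show ?thesis
    by (rule iso_intro[OF n comp_hom[OF t1 t2] mate_of_dual_retraction[OF assms]
          mate_of_dual_section[OF assms]])
qed

text \<open>Conversely, if that mate is invertible, the internal hom [A,I]^l together with
  its evaluation is a left dual of A: the coevaluation is the inverse of the mate
  applied to the name I \<rightarrow> [A,A]^l of the identity.\<close>

lemma left_dual_from_iso_mate:
  assumes A: "A \<in> cObj C" and uA: "internal_hom A A E v" and u1: "internal_hom A I V e"
    and c: "c \<in> Hom (A \<odot> V) E" and eq: "v \<cdot> (c \<otimes> idm A) = idm A \<otimes> e"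
    and ic: "iso C c"
  shows "\<exists>k. left_dual A V e k"
proof -
  have E: "E \<in> cObj C" and v: "v \<in> Hom (E \<odot> A) A" using internal_hom_D[OF uA] by auto
  have V: "V \<in> cObj C" using internal_hom_D[OF u1] by auto
  have iA: "idm A \<in> Hom (I \<odot> A) A" using id_hom[OF A] A by simp
  obtain j where j: "j \<in> Hom I E" "v \<cdot> (j \<otimes> idm A) = idm A"
    using internal_hom_exists[OF uA unit_ob iA] by blast
  obtain c' where c': "c' \<in> Hom E (A \<odot> V)" "c \<cdot> c' = idm E" using iso_inv[OF ic c] by blast
  have k: "c' \<cdot> j \<in> Hom I (A \<odot> V)" by (rule comp_hom[OF j(1) c'(1)])
  have kA: "(c' \<cdot> j) \<otimes> idm A \<in> Hom A (A \<odot> V \<odot> A)" using ten_hom[OF k id_hom[OF A]] A V by simp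
  have cA: "c \<otimes> idm A \<in> Hom (A \<odot> V \<odot> A) (E \<odot> A)" using ten_hom[OF c id_hom[OF A]] A V by simp
  have "(idm A \<otimes> e) \<cdot> ((c' \<cdot> j) \<otimes> idm A) = v \<cdot> ((c \<otimes> idm A) \<cdot> ((c' \<cdot> j) \<otimes> idm A))"
    using eq comp_assoc[OF kA cA v] by simp
  also have "\<dots> = v \<cdot> ((c \<cdot> (c' \<cdot> j)) \<otimes> idm A)" using comp_ten_idr[OF k c A] by simp
  also have "c \<cdot> (c' \<cdot> j) = j" using comp_assoc[OF j(1) c'(1) c] c'(2) j(1) by simp
  finally have z1: "(idm A \<otimes> e) \<cdot> ((c' \<cdot> j) \<otimes> idm A) = idm A" using j(2) by simp
  show ?thesis using internal_hom_left_dual[OF A u1 k z1] by blast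
qed

end

lemma left_closed_cat: "left_closed C \<Longrightarrow> strict_monoidal_cat C"
  unfolding left_closed_def by (simp add: strict_monoidal_cat.intro)

lemma left_closed_internal_hom:
  assumes l: "left_closed C" and X: "X \<in> cObj C" and Y: "Y \<in> cObj C"
  shows "strict_monoidal_cat.internal_hom C X Y (cHom C X Y) (cEv C X Y)"
  using l X Y unfolding strict_monoidal_cat.internal_hom_def[OF left_closed_cat[OF l]] left_closed_def
  by simp

text \<open>A strong monoidal functor U : D \<rightarrow> C.  Only C gets local notation (notation
  for both categories would make terms ambiguous); facts about D are obtained
  through D_cat.\<close>

locale strong_monoidal_functor_ctx = C: strict_monoidal_cat C
  for C :: "('o2, 'm2, 'z2) lcmc_scheme" +
  fixes D :: "('o1, 'm1, 'z1) lcmc_scheme"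
    and U :: "('o1, 'm1, 'o2, 'm2, 'z3) mfun_scheme"
  assumes smf: "strong_monoidal_functor D C U"
begin

lemma D_cat: "strict_monoidal_cat D"
  using smf unfolding strong_monoidal_functor_def by (simp add: strict_monoidal_cat.intro)

lemmas D_id_hom = strict_monoidal_cat.id_hom[OF D_cat]
  and D_ten_hom = strict_monoidal_cat.ten_hom[OF D_cat]
  and D_tO_ob = strict_monoidal_cat.tO_ob[OF D_cat]
  and D_tO_assoc = strict_monoidal_cat.tO_assoc[OF D_cat]
  and D_tO_unit = strict_monoidal_cat.tO_unit[OF D_cat]
  and D_unit_ob = strict_monoidal_cat.unit_ob[OF D_cat]

lemma U_ob: "a \<in> cObj D \<Longrightarrow> fObj U a \<in> cObj C"
  using smf unfolding strong_monoidal_functor_def is_functor_def by blast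

lemma U_hom: "f \<in> hom D a b \<Longrightarrow> fArr U f \<in> C.Hom (fObj U a) (fObj U b)"
  using smf unfolding strong_monoidal_functor_def is_functor_def hom_def by blast

lemma U_id: "a \<in> cObj D \<Longrightarrow> fArr U (cId D a) = C.idm (fObj U a)"
  using smf unfolding strong_monoidal_functor_def is_functor_def by blast

lemma U_comp: "f \<in> hom D a b \<Longrightarrow> g \<in> hom D b c \<Longrightarrow> fArr U (cComp D g f) = fArr U g \<cdot> fArr U f"
  using smf unfolding strong_monoidal_functor_def is_functor_def hom_def by auto

lemma U_two: "a \<in> cObj D \<Longrightarrow> b \<in> cObj D \<Longrightarrow>
    fTwo U a b \<in> C.Hom (fObj U a \<odot> fObj U b) (fObj U (cTen D a b)) \<and> iso C (fTwo U a b)"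
  using smf unfolding strong_monoidal_functor_def by blast

lemma U_zero: "fZero U \<in> C.Hom C.I (fObj U (cUnit D)) \<and> iso C (fZero U)"
  using smf unfolding strong_monoidal_functor_def by blast

lemma U_two_nat: "f \<in> hom D a b \<Longrightarrow> g \<in> hom D c d \<Longrightarrow>
    fTwo U b d \<cdot> (fArr U f \<otimes> fArr U g) = fArr U (cTenA D f g) \<cdot> fTwo U a c"
  using smf unfolding strong_monoidal_functor_def hom_def by auto

lemma U_two_assoc: "a \<in> cObj D \<Longrightarrow> b \<in> cObj D \<Longrightarrow> e \<in> cObj D \<Longrightarrow>
    fTwo U (cTen D a b) e \<cdot> (fTwo U a b \<otimes> C.idm (fObj U e))
    = fTwo U a (cTen D b e) \<cdot> (C.idm (fObj U a) \<otimes> fTwo U b e)"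
  using smf unfolding strong_monoidal_functor_def by blast

lemma U_unit_right: "a \<in> cObj D \<Longrightarrow>
    fTwo U a (cUnit D) \<cdot> (C.idm (fObj U a) \<otimes> fZero U) = C.idm (fObj U a)"
  using smf unfolding strong_monoidal_functor_def by blast

text \<open>With u the inverse of U_0, the right unit constraint says U_2(A, I) = UA \<otimes> u.\<close>

lemma U_two_unit_right:
  assumes X: "X \<in> cObj D" and u: "u \<in> C.Hom (fObj U (cUnit D)) C.I"
    and inv: "fZero U \<cdot> u = C.idm (fObj U (cUnit D))"
  shows "fTwo U X (cUnit D) = C.idm (fObj U X) \<otimes> u"
proof -
  let ?A = "fObj U X" and ?UI = "fObj U (cUnit D)"
  have A: "?A \<in> cObj C" and UI: "?UI \<in> cObj C" using U_ob X D_unit_ob by auto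
  have U0: "fZero U \<in> C.Hom C.I ?UI" using U_zero by blast
  have t: "fTwo U X (cUnit D) \<in> C.Hom (?A \<odot> ?UI) ?A" using U_two[OF X D_unit_ob] X D_tO_unit by simp
  have au: "C.idm ?A \<otimes> u \<in> C.Hom (?A \<odot> ?UI) ?A" using C.ten_hom[OF C.id_hom[OF A] u] A by simp
  have a0: "C.idm ?A \<otimes> fZero U \<in> C.Hom ?A (?A \<odot> ?UI)" using C.ten_hom[OF C.id_hom[OF A] U0] A by simp
  have "fTwo U X (cUnit D) = fTwo U X (cUnit D) \<cdot> (C.idm ?A \<otimes> (fZero U \<cdot> u))"
    using inv t A UI by simp
  also have "\<dots> = fTwo U X (cUnit D) \<cdot> ((C.idm ?A \<otimes> fZero U) \<cdot> (C.idm ?A \<otimes> u))"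
    using C.comp_ten_idl[OF u U0 A] by simp
  also have "\<dots> = C.idm ?A \<otimes> u"
    using C.comp_assoc[OF au a0 t] U_unit_right[OF X] au by simp
  finally show ?thesis .
qed

lemma image_of_mate_equation:
  assumes X: "X \<in> cObj D" and V: "V \<in> cObj D" and E: "E \<in> cObj D"
    and ev1: "ev1 \<in> hom D (cTen D V X) (cUnit D)"
    and evX: "evX \<in> hom D (cTen D E X) X" and c: "c \<in> hom D (cTen D X V) E"
    and mate: "cComp D evX (cTenA D c (cId D X)) = cTenA D (cId D X) ev1"
    and u: "u \<in> C.Hom (fObj U (cUnit D)) C.I" and inv: "fZero U \<cdot> u = C.idm (fObj U (cUnit D))"
  shows "(fArr U evX \<cdot> fTwo U E X) \<cdot> ((fArr U c \<cdot> fTwo U X V) \<otimes> C.idm (fObj U X))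
       = C.idm (fObj U X) \<otimes> (u \<cdot> (fArr U ev1 \<cdot> fTwo U V X))"
proof -
  let ?A = "fObj U X"
  let ?s = "fTwo U X V" and ?s2 = "fTwo U E X" and ?s3 = "fTwo U V X"
  let ?t3 = "fTwo U (cTen D X V) X" and ?t4 = "fTwo U X (cTen D V X)" and ?t6 = "fTwo U X (cUnit D)"
  let ?Uc = "fArr U c" and ?cX = "cTenA D c (cId D X)" and ?Xe = "cTenA D (cId D X) ev1"
  have A: "?A \<in> cObj C" using U_ob[OF X] .
  have idX: "cId D X \<in> hom D X X" using D_id_hom[OF X] .
  have cX: "?cX \<in> hom D (cTen D X (cTen D V X)) (cTen D E X)"
    using D_ten_hom[OF c idX] X V D_tO_assoc by simp
  have Xe: "?Xe \<in> hom D (cTen D X (cTen D V X)) X"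
    using D_ten_hom[OF idX ev1] X V D_tO_unit by simp
  have s: "?s \<in> C.Hom (?A \<odot> fObj U V) (fObj U (cTen D X V))" using U_two[OF X V] by blast
  have Uc: "?Uc \<in> C.Hom (fObj U (cTen D X V)) (fObj U E)" using U_hom[OF c] .
  have sA: "?s \<otimes> C.idm ?A \<in> C.Hom (?A \<odot> fObj U V \<odot> ?A) (fObj U (cTen D X V) \<odot> ?A)"
    using C.ten_hom[OF s C.id_hom[OF A]] A U_ob[OF V] by simp
  have UcA: "?Uc \<otimes> C.idm ?A \<in> C.Hom (fObj U (cTen D X V) \<odot> ?A) (fObj U E \<odot> ?A)"
    using C.ten_hom[OF Uc C.id_hom[OF A]] .
  have s2: "?s2 \<in> C.Hom (fObj U E \<odot> ?A) (fObj U (cTen D E X))" using U_two[OF E X] by blast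
  have UevX: "fArr U evX \<in> C.Hom (fObj U (cTen D E X)) ?A" using U_hom[OF evX] .
  have t3: "?t3 \<in> C.Hom (fObj U (cTen D X V) \<odot> ?A) (fObj U (cTen D X (cTen D V X)))"
    using U_two[OF D_tO_ob[OF X V] X] X V D_tO_assoc by simp
  have t4: "?t4 \<in> C.Hom (?A \<odot> fObj U (cTen D V X)) (fObj U (cTen D X (cTen D V X)))"
    using U_two[OF X D_tO_ob[OF V X]] by blast
  have s3: "?s3 \<in> C.Hom (fObj U V \<odot> ?A) (fObj U (cTen D V X))" using U_two[OF V X] by blast
  have t5: "C.idm ?A \<otimes> ?s3 \<in> C.Hom (?A \<odot> fObj U V \<odot> ?A) (?A \<odot> fObj U (cTen D V X))"
    using C.ten_hom[OF C.id_hom[OF A] s3] .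
  have t6: "?t6 \<in> C.Hom (?A \<odot> fObj U (cUnit D)) ?A"
    using U_two[OF X D_unit_ob] X D_tO_unit by simp
  have Uev1: "fArr U ev1 \<in> C.Hom (fObj U (cTen D V X)) (fObj U (cUnit D))" using U_hom[OF ev1] .
  have t7: "C.idm ?A \<otimes> fArr U ev1 \<in> C.Hom (?A \<odot> fObj U (cTen D V X)) (?A \<odot> fObj U (cUnit D))"
    using C.ten_hom[OF C.id_hom[OF A] Uev1] .
  have nat1: "?s2 \<cdot> (?Uc \<otimes> C.idm ?A) = fArr U ?cX \<cdot> ?t3"
    using U_two_nat[OF c idX] U_id[OF X] by simp
  have nat2: "?t6 \<cdot> (C.idm ?A \<otimes> fArr U ev1) = fArr U ?Xe \<cdot> ?t4"
    using U_two_nat[OF idX ev1] U_id[OF X] by simp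
  have ass: "?t3 \<cdot> (?s \<otimes> C.idm ?A) = ?t4 \<cdot> (C.idm ?A \<otimes> ?s3)"
    using U_two_assoc[OF X V X] .
  have Umate: "fArr U evX \<cdot> fArr U ?cX = fArr U ?Xe"
    using U_comp[OF cX evX] mate by simp
  have "(fArr U evX \<cdot> ?s2) \<cdot> ((?Uc \<cdot> ?s) \<otimes> C.idm ?A)
      = (fArr U evX \<cdot> ?s2) \<cdot> ((?Uc \<otimes> C.idm ?A) \<cdot> (?s \<otimes> C.idm ?A))"
    using C.comp_ten_idr[OF s Uc A] by simp
  also have "\<dots> = fArr U evX \<cdot> ((?s2 \<cdot> (?Uc \<otimes> C.idm ?A)) \<cdot> (?s \<otimes> C.idm ?A))"
    using C.comp_assoc[OF C.comp_hom[OF sA UcA] s2 UevX] C.comp_assoc[OF sA UcA s2] by simp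
  also have "\<dots> = fArr U evX \<cdot> (fArr U ?cX \<cdot> (?t3 \<cdot> (?s \<otimes> C.idm ?A)))"
    using nat1 C.comp_assoc[OF sA t3 U_hom[OF cX]] by simp
  also have "\<dots> = fArr U ?Xe \<cdot> (?t4 \<cdot> (C.idm ?A \<otimes> ?s3))"
    using C.comp_assoc[OF C.comp_hom[OF sA t3] U_hom[OF cX] UevX] Umate ass by simp
  also have "\<dots> = ?t6 \<cdot> ((C.idm ?A \<otimes> fArr U ev1) \<cdot> (C.idm ?A \<otimes> ?s3))"
    using C.comp_assoc[OF t5 t4 U_hom[OF Xe]] nat2 C.comp_assoc[OF t5 t7 t6] by simp
  also have "\<dots> = (C.idm ?A \<otimes> u) \<cdot> (C.idm ?A \<otimes> (fArr U ev1 \<cdot> ?s3))"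
    using C.comp_ten_idl[OF s3 Uev1 A] U_two_unit_right[OF X u inv] by simp
  also have "\<dots> = C.idm ?A \<otimes> (u \<cdot> (fArr U ev1 \<cdot> ?s3))"
    using C.comp_ten_idl[OF C.comp_hom[OF s3 Uev1] u A] by simp
  finally show ?thesis .
qed

end

locale closed_strong_monoidal_functor_ctx = strong_monoidal_functor_ctx +
  assumes D_closed: "left_closed D" and C_closed: "left_closed C"
begin

lemma closed_comparison_prop:
  assumes X: "X \<in> cObj D" and Y: "Y \<in> cObj D"
  shows "closed_comparison D C U X Y \<in> C.Hom (fObj U (cHom D X Y)) (cHom C (fObj U X) (fObj U Y)) \<and>
    cEv C (fObj U X) (fObj U Y) \<cdot> (closed_comparison D C U X Y \<otimes> C.idm (fObj U X))
      = fArr U (cEv D X Y) \<cdot> fTwo U (cHom D X Y) X"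
proof -
  have uD: "strict_monoidal_cat.internal_hom D X Y (cHom D X Y) (cEv D X Y)"
    by (rule left_closed_internal_hom[OF D_closed X Y])
  have HD: "cHom D X Y \<in> cObj D" and evD: "cEv D X Y \<in> hom D (cTen D (cHom D X Y) X) Y"
    using strict_monoidal_cat.internal_hom_D[OF D_cat uD] by auto
  have f: "fArr U (cEv D X Y) \<cdot> fTwo U (cHom D X Y) X
      \<in> C.Hom (fObj U (cHom D X Y) \<odot> fObj U X) (fObj U Y)"
    using C.comp_hom[OF _ U_hom[OF evD]] U_two[OF HD X] by blast
  have "C.internal_hom (fObj U X) (fObj U Y) (cHom C (fObj U X) (fObj U Y)) (cEv C (fObj U X) (fObj U Y))"
    by (rule left_closed_internal_hom[OF C_closed U_ob[OF X] U_ob[OF Y]])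
  then have "\<exists>!g. g \<in> C.Hom (fObj U (cHom D X Y)) (cHom C (fObj U X) (fObj U Y)) \<and>
     cEv C (fObj U X) (fObj U Y) \<cdot> (g \<otimes> C.idm (fObj U X)) = fArr U (cEv D X Y) \<cdot> fTwo U (cHom D X Y) X"
    using U_ob[OF HD] f unfolding C.internal_hom_def by simp
  from theI'[OF this] show ?thesis unfolding closed_comparison_def .
qed

text \<open>If U is left closed and C is left autonomous, then U[X,I]^l is a left dual of
  UX: by the comparison U^l_{X,I} and the inverse u of U_0 it is an internal hom
  [UX,I]^l, and in C every such internal hom is a left dual.\<close>

lemma image_of_internal_hom_left_dual:
  assumes lcf: "left_closed_functor D C U" and aut: "left_autonomous C" and X: "X \<in> cObj D"
    and u: "u \<in> C.Hom (fObj U (cUnit D)) C.I" "iso C u"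
  shows "\<exists>k. C.left_dual (fObj U X) (fObj U (cHom D X (cUnit D)))
     (u \<cdot> (cEv C (fObj U X) (fObj U (cUnit D)) \<cdot> (closed_comparison D C U X (cUnit D) \<otimes> C.idm (fObj U X)))) k"
proof -
  let ?A = "fObj U X" and ?UI = "fObj U (cUnit D)" and ?Ul = "closed_comparison D C U X (cUnit D)"
  have A: "?A \<in> cObj C" and UI: "?UI \<in> cObj C" using U_ob X D_unit_ob by auto
  have Ul: "?Ul \<in> C.Hom (fObj U (cHom D X (cUnit D))) (cHom C ?A ?UI)" "iso C ?Ul"
    using closed_comparison_prop[OF X D_unit_ob] lcf X D_unit_ob unfolding left_closed_functor_def
    by auto
  have "C.internal_hom ?A ?UI (cHom C ?A ?UI) (cEv C ?A ?UI)"
    by (rule left_closed_internal_hom[OF C_closed A UI])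
  then have "C.internal_hom ?A C.I (fObj U (cHom D X (cUnit D))) (u \<cdot> (cEv C ?A ?UI \<cdot> (?Ul \<otimes> C.idm ?A)))"
    by (rule C.internal_hom_transport_target[OF A C.internal_hom_transport_object[OF A _ Ul] u])
  moreover obtain W0 e0 k0 where "C.left_dual ?A W0 e0 k0" using aut A C.left_autonomous_iff by blast
  ultimately show ?thesis using C.internal_hom_is_left_dual[OF A] by blast
qed

text \<open>Under the same hypotheses U maps the mate
  c : X \<otimes> [X,I]^l \<rightarrow> [X,X]^l of X \<otimes> ev to an isomorphism: up to the invertible
  maps U^l_{X,X} and U_2, the image Uc is the mate attached to the left dual
  U[X,I]^l of UX, which is invertible in C.\<close>

lemma image_of_mate_iso:
  assumes lcf: "left_closed_functor D C U" and aut: "left_autonomous C" and X: "X \<in> cObj D"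
    and c: "c \<in> hom D (cTen D X (cHom D X (cUnit D))) (cHom D X X)"
    and mate: "cComp D (cEv D X X) (cTenA D c (cId D X)) = cTenA D (cId D X) (cEv D X (cUnit D))"
  shows "iso C (fArr U c)"
proof -
  let ?I = "cUnit D" and ?V = "cHom D X (cUnit D)" and ?E = "cHom D X X"
  let ?A = "fObj U X" and ?UI = "fObj U (cUnit D)" and ?UlX = "closed_comparison D C U X X"
  have uV: "strict_monoidal_cat.internal_hom D X ?I ?V (cEv D X ?I)"
    and uE: "strict_monoidal_cat.internal_hom D X X ?E (cEv D X X)"
    using left_closed_internal_hom[OF D_closed] X D_unit_ob by auto
  have V: "?V \<in> cObj D" and ev1: "cEv D X ?I \<in> hom D (cTen D ?V X) ?I"
    and E: "?E \<in> cObj D" and evX: "cEv D X X \<in> hom D (cTen D ?E X) X"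
    using strict_monoidal_cat.internal_hom_D[OF D_cat] uV uE by auto
  have A: "?A \<in> cObj C" using U_ob X by auto
  have UlX: "?UlX \<in> C.Hom (fObj U ?E) (cHom C ?A ?A)" "iso C ?UlX"
    "cEv C ?A ?A \<cdot> (?UlX \<otimes> C.idm ?A) = fArr U (cEv D X X) \<cdot> fTwo U ?E X"
    using closed_comparison_prop[OF X X] lcf X unfolding left_closed_functor_def by auto
  obtain u where u: "u \<in> C.Hom ?UI C.I" "u \<cdot> fZero U = C.idm C.I" "fZero U \<cdot> u = C.idm ?UI"
    using C.iso_inv U_zero by blast
  have iso_u: "iso C u" by (rule C.iso_intro[OF u(1) _ u(3) u(2)]) (use U_zero in blast)
  obtain k where dual: "C.left_dual ?A (fObj U ?V)
      (u \<cdot> (cEv C ?A ?UI \<cdot> (closed_comparison D C U X ?I \<otimes> C.idm ?A))) k"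
    using image_of_internal_hom_left_dual[OF lcf aut X u(1) iso_u] by blast
  let ?s = "fTwo U X ?V"
  have s: "?s \<in> C.Hom (?A \<odot> fObj U ?V) (fObj U (cTen D X ?V))" "iso C ?s"
    using U_two[OF X V] by auto
  have Uc: "fArr U c \<in> C.Hom (fObj U (cTen D X ?V)) (fObj U ?E)" using U_hom[OF c] .
  have ucs: "fArr U c \<cdot> ?s \<in> C.Hom (?A \<odot> fObj U ?V) (fObj U ?E)" by (rule C.comp_hom[OF s(1) Uc])
  have evA: "cEv C ?A ?A \<in> C.Hom (cHom C ?A ?A \<odot> ?A) ?A"
    using C.internal_hom_D[OF left_closed_internal_hom[OF C_closed A A]] by simp
  have "cEv C ?A ?A \<cdot> ((?UlX \<cdot> (fArr U c \<cdot> ?s)) \<otimes> C.idm ?A)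
      = (cEv C ?A ?A \<cdot> (?UlX \<otimes> C.idm ?A)) \<cdot> ((fArr U c \<cdot> ?s) \<otimes> C.idm ?A)"
    using C.comp_ten_idr[OF ucs UlX(1) A]
      C.comp_assoc[OF C.ten_hom[OF ucs C.id_hom[OF A]] C.ten_hom[OF UlX(1) C.id_hom[OF A]] evA] by simp
  also have "\<dots> = C.idm ?A \<otimes> (u \<cdot> (cEv C ?A ?UI \<cdot> (closed_comparison D C U X ?I \<otimes> C.idm ?A)))"
    using UlX(3) image_of_mate_equation[OF X V E ev1 evX c mate u(1,3)]
      closed_comparison_prop[OF X D_unit_ob] by simp
  finally have "iso C (?UlX \<cdot> (fArr U c \<cdot> ?s))"
    using C.mate_of_dual_iso[OF A dual left_closed_internal_hom[OF C_closed A A]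
        C.comp_hom[OF ucs UlX(1)]] by blast
  then show ?thesis by (rule C.iso_cancel[OF UlX(1) Uc s(1) UlX(2) s(2)])
qed

end

theorem mainTheorem4:
  fixes D :: "('o1, 'm1) lcmc" and C :: "('o2, 'm2) lcmc" and U :: "('o1, 'm1, 'o2, 'm2) mfun"
  assumes "left_closed D" and "left_closed C"
    and "strong_monoidal_functor D C U"
    and "conservative D C U" and "left_closed_functor D C U"
    and "left_autonomous C"
  shows "left_autonomous D"
proof -
  interpret closed_strong_monoidal_functor_ctx C D U
    using assms(1-3) left_closed_cat[OF assms(2)]
    by (simp add: closed_strong_monoidal_functor_ctx_def closed_strong_monoidal_functor_ctx_axioms_def
        strong_monoidal_functor_ctx_def strong_monoidal_functor_ctx_axioms_def)
  show ?thesis unfolding strict_monoidal_cat.left_autonomous_iff[OF D_cat]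
  proof
    fix X assume X: "X \<in> cObj D"
    have uV: "strict_monoidal_cat.internal_hom D X (cUnit D) (cHom D X (cUnit D)) (cEv D X (cUnit D))"
      and uE: "strict_monoidal_cat.internal_hom D X X (cHom D X X) (cEv D X X)"
      using left_closed_internal_hom[OF assms(1)] X D_unit_ob by auto
    obtain c where c: "c \<in> hom D (cTen D X (cHom D X (cUnit D))) (cHom D X X)"
      "cComp D (cEv D X X) (cTenA D c (cId D X)) = cTenA D (cId D X) (cEv D X (cUnit D))"
      using strict_monoidal_cat.mate_exists[OF D_cat X uE uV] by blast
    have "iso C (fArr U c)" by (rule image_of_mate_iso[OF assms(5,6) X c])
    then have "iso D c" using assms(4) c(1) unfolding conservative_def hom_def by blast
    then show "\<exists>W e k. strict_monoidal_cat.left_dual D X W e k"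
      using strict_monoidal_cat.left_dual_from_iso_mate[OF D_cat X uE uV c] by blast
  qed
qed

end
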